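(* Consider the networked SIR epidemic-opinion model described in the context, under the standing assumption stated there. Every equilibrium $(s_e,x_e,o_e)\in[0,1]^{3n}$ of the model has the form $(s_e,\mathbf 0,(\bar L+I_n)^{-1}(\mathbf 1_n-s_e))$ with $s_e\in[0,1]^n$; conversely, for every $s_e\in[0,1]^n$ the point $(s_e,\mathbf 0,(\bar L+I_n)^{-1}(\mathbf 1_n-s_e))$ is an equilibrium, and $[(\bar L+I_n)^{-1}(\mathbf 1_n-s_e)]_i\in[0,1]$ for all $i\in[n]$.
   Context: There are $n$ communities. For $t\ge0$ and $i\in[n]$, $s_i(t),x_i(t),o_i(t)\in[0,1]$ denote the susceptible proportion, infected proportion and opinion of community $i$. The disease transmission network is a directed graph $\mathcal G=(\mathcal V,\mathcal E)$ on $n$ nodes with edge weights $\beta_{ij}>0$ if $(v_j,v_i)\in\mathcal E$ (and $\beta_{ij}=0$ otherwise); $\mathcal N_i=\{v_j:(v_j,v_i)\in\mathcal E\}$. The opinion network is a directed graph $\bar{\mathcal G}$ on the same nodes with nonnegative weights $\bar a_{ij}$ and Laplacian $\bar L=\mathrm{diag}(k_1,\dots,k_n)-\bar A$, where $[\bar A]_{ij}=\bar a_{ij}$ and $k_i=\sum_j \bar a_{ij}$. Parameters: $\beta_{\min}>0$, $\gamma_{\min}>0$, recovery rates $\gamma_i$. The model is $\dot s_i=-s_i\sum_{j\in\mathcal N_i}\big(\beta_{ij}-(\beta_{ij}-\beta_{\min})o_i\big)x_j$, $\dot x_i=s_i\sum_{j\in\mathcal N_i}\big(\beta_{ij}-(\beta_{ij}-\beta_{\min})o_i\big)x_j-\big(\gamma_{\min}+(\gamma_i-\gamma_{\min})o_i\big)x_i$,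 $\dot o=(\mathbf 1_n-s)-(\bar L+I_n)o$. Standing assumption: $\gamma_i\ge\gamma_{\min}>0$, $\beta_{ij}\ge\beta_{\min}>0$ for all $j\in\mathcal N_i$, and both $\mathcal G$ and $\bar{\mathcal G}$ are strongly connected. *)

theory Defs
  imports "HOL-Analysis.Analysis"
begin

text \<open>Communities are indexed by a finite type 'n (so n = CARD('n)).
  Disease network: beta i j > 0 iff (v_j, v_i) is an edge; N_i = {j. beta i j > 0}.
  Opinion network: weights abar i j >= 0, edge (v_j, v_i) iff abar i j > 0.\<close>

definition strongly_connected :: "('n \<Rightarrow> 'n \<Rightarrow> bool) \<Rightarrow> bool" where
  "strongly_connected E \<longleftrightarrow> (\<forall>u v. (u, v) \<in> {(a, b). E a b}\<^sup>*)"

definition nbrs :: "('n \<Rightarrow> 'n \<Rightarrow> real) \<Rightarrow> 'n \<Rightarrow> 'n set" where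
  "nbrs beta i = {j. beta i j > 0}"

definition unit_box :: "(real ^ 'n) set" where
  "unit_box = {v. \<forall>i. 0 \<le> v $ i \<and> v $ i \<le> 1}"

definition laplacian :: "('n::finite \<Rightarrow> 'n \<Rightarrow> real) \<Rightarrow> real ^ 'n ^ 'n" where
  "laplacian a = (\<chi> i j. (if i = j then (\<Sum>k\<in>UNIV. a i k) else 0) - a i j)"

definition infection_force ::
  "('n::finite \<Rightarrow> 'n \<Rightarrow> real) \<Rightarrow> real \<Rightarrow> real ^ 'n \<Rightarrow> real ^ 'n \<Rightarrow> 'n \<Rightarrow> real" where
  "infection_force beta bmin x op i =
     (\<Sum>j\<in>nbrs beta i. (beta i j - (beta i j - bmin) * op $ i) * x $ j)"

definition s_dot ::
  "('n::finite \<Rightarrow> 'n \<Rightarrow> real) \<Rightarrow> real \<Rightarrow> real ^ 'n \<Rightarrow> real ^ 'n \<Rightarrow> real ^ 'n \<Rightarrow> real ^ 'n" where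
  "s_dot beta bmin s x op = (\<chi> i. - s $ i * infection_force beta bmin x op i)"

definition x_dot ::
  "('n::finite \<Rightarrow> 'n \<Rightarrow> real) \<Rightarrow> real \<Rightarrow> ('n \<Rightarrow> real) \<Rightarrow> real
     \<Rightarrow> real ^ 'n \<Rightarrow> real ^ 'n \<Rightarrow> real ^ 'n \<Rightarrow> real ^ 'n" where
  "x_dot beta bmin gamma gmin s x op = (\<chi> i. s $ i * infection_force beta bmin x op i
       - (gmin + (gamma i - gmin) * op $ i) * x $ i)"

definition o_dot ::
  "('n::finite \<Rightarrow> 'n \<Rightarrow> real) \<Rightarrow> real ^ 'n \<Rightarrow> real ^ 'n \<Rightarrow> real ^ 'n" where
  "o_dot abar s op = (1 - s) - (laplacian abar + mat 1) *v op"

definition is_equilibrium ::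
  "('n::finite \<Rightarrow> 'n \<Rightarrow> real) \<Rightarrow> real \<Rightarrow> ('n \<Rightarrow> real) \<Rightarrow> real \<Rightarrow> ('n \<Rightarrow> 'n \<Rightarrow> real)
     \<Rightarrow> real ^ 'n \<Rightarrow> real ^ 'n \<Rightarrow> real ^ 'n \<Rightarrow> bool" where
  "is_equilibrium beta bmin gamma gmin abar s x op \<longleftrightarrow>
     s_dot beta bmin s x op = 0 \<and> x_dot beta bmin gamma gmin s x op = 0 \<and> o_dot abar s op = 0"

end

theory Submission
  imports Defs
begin

text \<open>\<open>laplacian a + mat 1\<close> obeys a discrete maximum principle: at an index \<open>i\<close> where \<open>v\<close> is
  maximal, \<open>((laplacian a + mat 1) *v v) $ i = v $ i + (\<Sum>k. a i k * (v $ i - v $ k)) \<ge> v $ i\<close>,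
  so every entry of \<open>v\<close> is at most the largest entry of \<open>(laplacian a + mat 1) *v v\<close>, and
  symmetrically for minima. This gives a trivial kernel, hence invertibility, and shows that the
  inverse maps \<open>[0,1]\<^sup>n\<close> into itself. At an equilibrium the \<open>s\<close>-equation kills the infection
  term of the \<open>x\<close>-equation, which leaves a positive recovery rate times \<open>x $ i\<close>, so \<open>x = 0\<close>;
  what remains is the linear opinion equation.\<close>

lemma matrix_inv_right:
  fixes A :: "'a::field ^ 'n ^ 'n"
  assumes "invertible A"
  shows "A ** matrix_inv A = mat 1"
  using assms unfolding invertible_def matrix_inv_def by (metis (mono_tags, lifting) someI_ex)

lemma matrix_inv_left:
  fixes A :: "'a::field ^ 'n ^ 'n"
  assumes "invertible A"
  shows "matrix_inv A ** A = mat 1"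
  using assms unfolding invertible_def matrix_inv_def by (metis (mono_tags, lifting) someI_ex)

lemma matrix_vector_mult_eq_iff_matrix_inv:
  fixes A :: "'a::field ^ 'n ^ 'n"
  assumes "invertible A"
  shows "A *v x = b \<longleftrightarrow> x = matrix_inv A *v b"
  using matrix_inv_left[OF assms] matrix_inv_right[OF assms]
  by (auto simp: matrix_vector_mul_assoc)

lemma laplacian_plus_id_mult_nth:
  "((laplacian a + mat 1) *v v) $ i = v $ i + (\<Sum>k\<in>UNIV. a i k * (v $ i - v $ k))"
proof -
  have "((laplacian a + mat 1) *v v) $ i
     = (\<Sum>j\<in>UNIV. ((if i = j then (\<Sum>k\<in>UNIV. a i k) else 0) - a i j
          + (if i = j then 1 else 0)) * v $ j)"
    by (simp add: matrix_vector_mult_def laplacian_def mat_def)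
  also have "\<dots> = (\<Sum>j\<in>UNIV. if i = j then ((\<Sum>k\<in>UNIV. a i k) + 1) * v $ j else 0)
      - (\<Sum>j\<in>UNIV. a i j * v $ j)"
    by (simp only: sum_subtractf[symmetric], rule sum.cong, auto simp: algebra_simps)
  also have "\<dots> = ((\<Sum>k\<in>UNIV. a i k) + 1) * v $ i - (\<Sum>j\<in>UNIV. a i j * v $ j)"
    by simp
  also have "\<dots> = v $ i + (\<Sum>k\<in>UNIV. a i k * (v $ i - v $ k))"
    by (simp add: algebra_simps sum_subtractf sum_distrib_left sum_distrib_right)
  finally show ?thesis .
qed

lemma laplacian_plus_id_max_principle:
  assumes a_nonneg: "\<forall>i j. a i j \<ge> 0"
    and bound: "\<forall>j. ((laplacian a + mat 1) *v v) $ j \<le> c"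
  shows "v $ k \<le> c"
proof -
  have "Max (range (($) v)) \<in> range (($) v)"
    by (rule Max_in) simp_all
  then obtain i where i: "Max (range (($) v)) = v $ i"
    by blast
  have max: "v $ k \<le> v $ i" for k
    unfolding i[symmetric] by (rule Max_ge) simp_all
  have "0 \<le> (\<Sum>k\<in>UNIV. a i k * (v $ i - v $ k))"
    using a_nonneg max by (intro sum_nonneg) simp
  then have "v $ i \<le> ((laplacian a + mat 1) *v v) $ i"
    unfolding laplacian_plus_id_mult_nth by simp
  then show ?thesis
    using max bound order_trans by metis
qed

lemma laplacian_plus_id_min_principle:
  assumes a_nonneg: "\<forall>i j. a i j \<ge> 0"
    and bound: "\<forall>j. ((laplacian a + mat 1) *v v) $ j \<ge> c"
  shows "v $ k \<ge> c"
proof -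
  have "(laplacian a + mat 1) *v (- v) = - ((laplacian a + mat 1) *v v)"
    using matrix_vector_mult_diff_distrib[of "laplacian a + mat 1" 0 v] by simp
  then have "\<forall>j. ((laplacian a + mat 1) *v (- v)) $ j \<le> - c"
    using bound by simp
  then show ?thesis
    using laplacian_plus_id_max_principle[OF a_nonneg] by fastforce
qed

lemma invertible_laplacian_plus_id:
  assumes "\<forall>i j. a i j \<ge> 0"
  shows "invertible (laplacian a + mat 1)"
  unfolding invertible_left_inverse matrix_left_invertible_ker
proof (intro allI impI)
  fix v
  assume "(laplacian a + mat 1) *v v = 0"
  then have "v $ k \<le> 0" "v $ k \<ge> 0" for k
    using laplacian_plus_id_max_principle[OF assms] laplacian_plus_id_min_principle[OF assms]
    by auto
  then show "v = 0"
    by (simp add: vec_eq_iff antisym)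
qed

lemma laplacian_plus_id_inv_bounds:
  assumes a_nonneg: "\<forall>i j. a i j \<ge> 0"
    and b_bounds: "\<forall>j. b $ j \<in> {lo..hi}"
  shows "(matrix_inv (laplacian a + mat 1) *v b) $ i \<in> {lo..hi}"
proof -
  have "(laplacian a + mat 1) *v (matrix_inv (laplacian a + mat 1) *v b) = b"
    using matrix_vector_mult_eq_iff_matrix_inv[OF invertible_laplacian_plus_id[OF a_nonneg]] by blast
  then show ?thesis
    using b_bounds laplacian_plus_id_max_principle[OF a_nonneg]
      laplacian_plus_id_min_principle[OF a_nonneg]
    by simp
qed

lemma is_equilibrium_iff_disease_free:
  assumes gmin_pos: "gmin > 0" and gamma_ge: "\<forall>i. gamma i \<ge> gmin"
    and op_nonneg: "\<forall>i. op $ i \<ge> 0"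
  shows "is_equilibrium beta bmin gamma gmin abar s x op
    \<longleftrightarrow> x = 0 \<and> (laplacian abar + mat 1) *v op = 1 - s"
proof
  assume eq: "is_equilibrium beta bmin gamma gmin abar s x op"
  have "x $ i = 0" for i
  proof -
    have "s_dot beta bmin s x op $ i = 0" "x_dot beta bmin gamma gmin s x op $ i = 0"
      using eq unfolding is_equilibrium_def by simp_all
    then have "(gmin + (gamma i - gmin) * op $ i) * x $ i = 0"
      unfolding s_dot_def x_dot_def by (auto simp del: mult_eq_0_iff)
    moreover have "gmin + (gamma i - gmin) * op $ i > 0"
      using gmin_pos gamma_ge op_nonneg by (simp add: add_pos_nonneg)
    ultimately show ?thesis
      by simp
  qed
  then show "x = 0 \<and> (laplacian abar + mat 1) *v op = 1 - s"
    using eq unfolding is_equilibrium_def o_dot_def by (simp add: vec_eq_iff)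
next
  assume "x = 0 \<and> (laplacian abar + mat 1) *v op = 1 - s"
  then show "is_equilibrium beta bmin gamma gmin abar s x op"
    unfolding is_equilibrium_def s_dot_def x_dot_def o_dot_def infection_force_def
    by (simp add: vec_eq_iff)
qed

theorem lemma3:
  fixes beta :: "'n::finite \<Rightarrow> 'n \<Rightarrow> real" and abar :: "'n \<Rightarrow> 'n \<Rightarrow> real"
    and gamma :: "'n \<Rightarrow> real" and bmin gmin :: real
  assumes bmin_pos: "bmin > 0" and gmin_pos: "gmin > 0"
    and gamma_ge: "\<forall>i. gamma i \<ge> gmin"
    and beta_nonneg: "\<forall>i j. beta i j \<ge> 0"
    and beta_ge: "\<forall>i. \<forall>j\<in>nbrs beta i. beta i j \<ge> bmin"
    and abar_nonneg: "\<forall>i j. abar i j \<ge> 0"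
    and G_sc: "strongly_connected (\<lambda>j i. beta i j > 0)"
    and Gbar_sc: "strongly_connected (\<lambda>j i. abar i j > 0)"
  shows "invertible (laplacian abar + mat 1)
    \<and> (\<forall>s\<in>unit_box. \<forall>x\<in>unit_box. \<forall>op\<in>unit_box.
          is_equilibrium beta bmin gamma gmin abar s x op \<longrightarrow>
          x = 0 \<and> op = matrix_inv (laplacian abar + mat 1) *v (1 - s))
    \<and> (\<forall>s\<in>unit_box.
          is_equilibrium beta bmin gamma gmin abar s 0 (matrix_inv (laplacian abar + mat 1) *v (1 - s))
          \<and> (\<forall>i. (matrix_inv (laplacian abar + mat 1) *v (1 - s)) $ i \<in> {0..1}))"
proof -
  have inv: "invertible (laplacian abar + mat 1)"
    using invertible_laplacian_plus_id[OF abar_nonneg] .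
  note equilibrium = is_equilibrium_iff_disease_free[OF gmin_pos gamma_ge]
  note solve = matrix_vector_mult_eq_iff_matrix_inv[OF inv]
  have bounds: "(matrix_inv (laplacian abar + mat 1) *v (1 - s)) $ i \<in> {0..1}"
    if "s \<in> unit_box" for s i
    using that by (intro laplacian_plus_id_inv_bounds[OF abar_nonneg]) (simp add: unit_box_def)
  have classify: "x = 0 \<and> op = matrix_inv (laplacian abar + mat 1) *v (1 - s)"
    if "op \<in> unit_box" and "is_equilibrium beta bmin gamma gmin abar s x op" for s x op
    using that equilibrium solve by (simp add: unit_box_def)
  have realize:
    "is_equilibrium beta bmin gamma gmin abar s 0 (matrix_inv (laplacian abar + mat 1) *v (1 - s))"
    if "s \<in> unit_box" for s
    using equilibrium solve bounds[OF that] by simp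
  show ?thesis
    using inv classify realize bounds by blast
qed

end
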